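(* Let $f_1,\dots,f_m\in\mathbb{C}[x_1,\dots,x_n]$, fix an index $k\in\{1,\dots,n\}$, and let $f_{m+1}=x_k-u_0$, where $u_0$ is an extra variable treated as a parameter. Let $B$ be a finite favourable set of monomials in $x_1,\dots,x_n$ with associated monomial-multiple sets $T_1,\dots,T_{m+1}$ and coefficient matrix $\mathbf{C}(u_0)$ (as defined in the context). Partition $B=B_1\sqcup B_2$ in one of the two ways (a) $B_1=B\cap T_{m+1}$, or (b) $B_1=\{\mathbf{x}^{\alpha}\in B \mid \mathbf{x}^{\alpha}/x_k\in T_{m+1}\}$, with $B_2=B\setminus B_1$. Order the columns of $\mathbf{C}(u_0)$ so that those indexed by $B_1$ (vector $\mathbf{b}_1$) come first, followed by those indexed by $B_2$ (vector $\mathbf{b}_2$), and order the rows so that the rows coming from $f_1,\dots,f_m$ (upper block) precede the rows coming from $f_{m+1}$ (lower block). This gives a block partition $$\mathbf{C}(u_0)\begin{bmatrix}\mathbf{b}_1\\ \mathbf{b}_2\end{bmatrix}=\begin{bmatrix}\mathbf{C}_{11}&\mathbf{C}_{12}\\ \mathbf{C}_{21}&\mathbf{C}_{22}\end{bmatrix}\begin{bmatrix}\mathbf{b}_1\\ \mathbf{b}_2\end{bmatrix}.$$ If $\mathbf{C}_{12}$ has full column rank, then the resultant matrix constraint $\mathbf{M}(u_0)\mathbf{b}=\mathbf{0}$ can be converted into an eigenvalue problem: rows may be deleted from the upper block to obtain a square matrix $\mathbf{M}(u_0)$ whose upper-right block $\hat{\mathbf{A}}_{12}$ is square and invertible, and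 there is a square matrix $\mathbf{X}$ whose entries are functions of the coefficients of $f_1,\dots,f_m$ (and do not depend on $u_0$) such that every vector $\mathbf{b}=(\mathbf{b}_1,\mathbf{b}_2)$ with $\mathbf{M}(u_0)\mathbf{b}=\mathbf{0}$ satisfies $\mathbf{X}\mathbf{b}_1=u_0\mathbf{b}_1$ in case (a), and $\mathbf{X}\mathbf{b}_1=-\frac{1}{u_0}\mathbf{b}_1$ (for $u_0\neq 0$) in case (b).
   Context: For a finite set $B$ of monomials in $x_1,\dots,x_n$ and $i=1,\dots,m+1$, let $T_i$ be the set of all monomials $t$ such that every monomial occurring in $t f_i$ lies in $B$ (for $f_{m+1}=x_k-u_0$, $u_0$ is treated as a coefficient, so this means $t x_k\in B$ and $t\in B$). It is assumed that $B$ equals the set of monomials occurring in the extended system $\{t f_i : t\in T_i,\ i=1,\dots,m+1\}$. The coefficient matrix $\mathbf{C}(u_0)$ has one row for each pair $(i,t)$ with $t\in T_i$ and one column for each monomial of $B$; the entry is the coefficient of that monomial in $t f_i$ (so entries are affine in $u_0$). $B$ is called favourable if $\sum_{j=1}^{m+1}|T_j|\ge |B|$, $\min_j |T_j|>0$, and $\mathbf{C}(u_0)$ has column rank $|B|$ for a random value of $u_0$. The resultant matrix constraint is $\mathbf{M}(u_0)\mathbf{b}=\mathbf{0}$, where $\mathbf{M}(u_0)$ is a square matrix obtained from $\mathbf{C}(u_0)$ by deleting rows and $\mathbf{b}$ is the vector of monomials of $B$ in the chosen order. *)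

theory Defs
  imports Complex_Main "HOL-Library.Poly_Mapping"
begin

text \<open>Monomials in x_1..x_n are exponent vectors (finitely supported nat-to-nat maps) whose support lies in {1..n};
  multivariate polynomials over the complex numbers are finitely supported maps from
  monomials to coefficients, with the library's convolution product.\<close>

type_synonym monom = "nat \<Rightarrow>\<^sub>0 nat"
type_synonym mpoly = "monom \<Rightarrow>\<^sub>0 complex"

definition is_monom :: "nat \<Rightarrow> monom \<Rightarrow> bool" where
  "is_monom n t \<longleftrightarrow> Poly_Mapping.keys t \<subseteq> {1..n}"

definition mono_poly :: "monom \<Rightarrow> mpoly" where
  "mono_poly t = Poly_Mapping.single t 1"

definition var_x :: "nat \<Rightarrow> monom" where
  "var_x k = Poly_Mapping.single k 1"

definition f_ext :: "nat \<Rightarrow> complex \<Rightarrow> mpoly" where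
  "f_ext k u0 = Poly_Mapping.single (var_x k) 1 - Poly_Mapping.single 0 u0"

text \<open>The sets T_i, i = 1..m+1 (index m+1 is the extra polynomial x_k - u0).\<close>
definition Tset :: "nat \<Rightarrow> (nat \<Rightarrow> mpoly) \<Rightarrow> nat \<Rightarrow> nat \<Rightarrow> monom set \<Rightarrow> nat \<Rightarrow> monom set" where
  "Tset n f m k B i =
     (if i \<le> m then {t. is_monom n t \<and> Poly_Mapping.keys (mono_poly t * f i) \<subseteq> B}
      else {t. t \<in> B \<and> t + var_x k \<in> B})"

definition rows :: "nat \<Rightarrow> (nat \<Rightarrow> mpoly) \<Rightarrow> nat \<Rightarrow> nat \<Rightarrow> monom set \<Rightarrow> (nat \<times> monom) set" where
  "rows n f m k B = {(i, t). i \<in> {1..m+1} \<and> t \<in> Tset n f m k B i}"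

definition upper_rows where
  "upper_rows n f m k B = {(i, t) \<in> rows n f m k B. i \<le> m}"

definition lower_rows where
  "lower_rows n f m k B = {(i, t) \<in> rows n f m k B. i = m + 1}"

definition Cmat :: "(nat \<Rightarrow> mpoly) \<Rightarrow> nat \<Rightarrow> nat \<Rightarrow> complex \<Rightarrow> nat \<times> monom \<Rightarrow> monom \<Rightarrow> complex" where
  "Cmat f m k u0 r beta =
     (case r of (i, t) \<Rightarrow>
        Poly_Mapping.lookup (mono_poly t * (if i \<le> m then f i else f_ext k u0)) beta)"

definition B_generated :: "nat \<Rightarrow> (nat \<Rightarrow> mpoly) \<Rightarrow> nat \<Rightarrow> nat \<Rightarrow> monom set \<Rightarrow> bool" where
  "B_generated n f m k B \<longleftrightarrow>
     B = (\<Union>i\<in>{1..m}. \<Union>t\<in>Tset n f m k B i. Poly_Mapping.keys (mono_poly t * f i))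
         \<union> (\<Union>t\<in>Tset n f m k B (m+1). {t, t + var_x k})"

definition full_column_rank :: "'r set \<Rightarrow> 'c set \<Rightarrow> ('r \<Rightarrow> 'c \<Rightarrow> complex) \<Rightarrow> bool" where
  "full_column_rank R Cs A \<longleftrightarrow>
     (\<forall>v. (\<forall>r\<in>R. (\<Sum>c\<in>Cs. A r c * v c) = 0) \<longrightarrow> (\<forall>c\<in>Cs. v c = 0))"

definition square_invertible :: "'r set \<Rightarrow> 'c set \<Rightarrow> ('r \<Rightarrow> 'c \<Rightarrow> complex) \<Rightarrow> bool" where
  "square_invertible R Cs A \<longleftrightarrow> finite R \<and> finite Cs \<and> card R = card Cs \<and>
     (\<exists>N :: 'c \<Rightarrow> 'r \<Rightarrow> complex.
        (\<forall>r\<in>R. \<forall>r'\<in>R. (\<Sum>c\<in>Cs. A r c * N c r') = (if r = r' then 1 else 0)) \<and>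
        (\<forall>c\<in>Cs. \<forall>c'\<in>Cs. (\<Sum>r\<in>R. N c r * A r c') = (if c = c' then 1 else 0)))"

text \<open>Favourable: sum |T_j| \<ge> |B|, min |T_j| > 0, and C(u0) has column rank |B|
  for a generic (random) u0, i.e. for all but finitely many u0.\<close>
definition favourable :: "nat \<Rightarrow> (nat \<Rightarrow> mpoly) \<Rightarrow> nat \<Rightarrow> nat \<Rightarrow> monom set \<Rightarrow> bool" where
  "favourable n f m k B \<longleftrightarrow>
     (\<Sum>j=1..m+1. card (Tset n f m k B j)) \<ge> card B \<and>
     (\<forall>j\<in>{1..m+1}. card (Tset n f m k B j) > 0) \<and>
     finite {u0. \<not> full_column_rank (rows n f m k B) B (Cmat f m k u0)}"

definition B1_a where "B1_a n f m k B = B \<inter> Tset n f m k B (m+1)"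
definition B1_b where
  "B1_b n f m k B = {beta \<in> B. \<exists>t\<in>Tset n f m k B (m+1). beta = t + var_x k}"

end

theory Submission
  imports Defs
begin

(* The rows of C(u0) coming from f_1, ..., f_m do not involve u0, while the row (m+1, t) of the
   lower block says b(t x_k) = u0 b(t).  Gaussian elimination on the full column rank block C_12
   selects |B_2| upper rows on which it is square and invertible (each pivot step inverts a bordered
   matrix through its Schur complement).  Its inverse writes b_2 as a fixed linear function of b_1,
   so every null vector satisfies b = E b_1 for a matrix E that does not depend on u0.  In case (a)
   the rows t x_k of E give X b_1 = u0 b_1; in case (b) the entries of b_1 are the b(t x_k) = u0 b(t),
   and minus the rows t of E give X b_1 = -b_1 / u0. *)

definition right_inverse_on ::
    "'r set \<Rightarrow> 'c set \<Rightarrow> ('r \<Rightarrow> 'c \<Rightarrow> 'a::semiring_1) \<Rightarrow> ('c \<Rightarrow> 'r \<Rightarrow> 'a) \<Rightarrow> bool" where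
  "right_inverse_on R C A N \<longleftrightarrow>
     (\<forall>r\<in>R. \<forall>r'\<in>R. (\<Sum>c\<in>C. A r c * N c r') = (if r = r' then 1 else 0))"

lemma square_invertible_iff_right_inverse_on:
  "square_invertible R C A \<longleftrightarrow> finite R \<and> finite C \<and> card R = card C \<and>
     (\<exists>N. right_inverse_on R C A N \<and> right_inverse_on C R N A)"
  by (simp add: square_invertible_def right_inverse_on_def)

lemma right_inverse_on_transpose:
  fixes A :: "'r \<Rightarrow> 'c \<Rightarrow> 'a::comm_semiring_1"
  shows "right_inverse_on C R (\<lambda>c r. A r c) (\<lambda>r c. N c r) \<longleftrightarrow> right_inverse_on C R N A"
proof -
  have comm: "(\<Sum>r\<in>R. A r c * N c' r) = (\<Sum>r\<in>R. N c' r * A r c)" for c c'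
    by (simp add: mult.commute)
  have delta: "(if c' = c then 1 else 0) = (if c = c' then 1 else (0::'a))" for c c' :: 'c
    by simp
  show ?thesis
    unfolding right_inverse_on_def comm
    by (intro iffI ballI) (metis delta)+
qed

definition schur_complement :: "'r \<Rightarrow> 'c \<Rightarrow> ('r \<Rightarrow> 'c \<Rightarrow> 'a::field) \<Rightarrow> 'r \<Rightarrow> 'c \<Rightarrow> 'a" where
  "schur_complement r0 c0 A r c = A r c - A r c0 / A r0 c0 * A r0 c"

(* The inverse of the bordered matrix [[a, u], [w, S + w u / a]], where a = A r0 c0, u = A r0 and
   w = A _ c0, in terms of an inverse N of the Schur complement S. *)
definition bordered_inverse ::
    "'r \<Rightarrow> 'c \<Rightarrow> 'r set \<Rightarrow> 'c set \<Rightarrow> ('r \<Rightarrow> 'c \<Rightarrow> 'a::field) \<Rightarrow> ('c \<Rightarrow> 'r \<Rightarrow> 'a) \<Rightarrow> 'c \<Rightarrow> 'r \<Rightarrow> 'a" where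
  "bordered_inverse r0 c0 R C A N c r =
     (if c = c0 then
        if r = r0 then 1 / A r0 c0 + (\<Sum>c'\<in>C. A r0 c' * (\<Sum>r'\<in>R. N c' r' * A r' c0)) / (A r0 c0)\<^sup>2
        else - (\<Sum>c'\<in>C. A r0 c' * N c' r) / A r0 c0
      else if r = r0 then - (\<Sum>r'\<in>R. N c r' * A r' c0) / A r0 c0
      else N c r)"

lemma sum_schur_complement:
  "(\<Sum>c\<in>C. A r c * g c) =
     (\<Sum>c\<in>C. schur_complement r0 c0 A r c * g c) + A r c0 / A r0 c0 * (\<Sum>c\<in>C. A r0 c * g c)"
proof -
  have "(\<Sum>c\<in>C. A r c * g c) =
      (\<Sum>c\<in>C. schur_complement r0 c0 A r c * g c + A r c0 / A r0 c0 * (A r0 c * g c))"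
    by (intro sum.cong) (simp_all add: schur_complement_def algebra_simps)
  then show ?thesis
    by (simp add: sum.distrib sum_distrib_left)
qed

lemma right_inverse_on_mult:
  assumes "right_inverse_on R C A N" "finite R" "r \<in> R"
  shows "(\<Sum>c\<in>C. A r c * (\<Sum>r'\<in>R. N c r' * w r')) = w r"
proof -
  have "(\<Sum>c\<in>C. A r c * (\<Sum>r'\<in>R. N c r' * w r')) = (\<Sum>r'\<in>R. (\<Sum>c\<in>C. A r c * N c r') * w r')"
    by (simp add: sum_distrib_left sum_distrib_right mult.assoc sum.swap[of _ C])
  also have "\<dots> = w r"
    using assms by (simp add: right_inverse_on_def if_distrib[of "\<lambda>x. x * _"] cong: if_cong)
  finally show ?thesis .
qed

lemma right_inverse_on_insert:
  fixes A :: "'r \<Rightarrow> 'c \<Rightarrow> 'a::field"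
  assumes "finite R" "finite C" "r0 \<notin> R" "c0 \<notin> C" "A r0 c0 \<noteq> 0"
    and inv: "right_inverse_on R C (schur_complement r0 c0 A) N"
  shows "right_inverse_on (insert r0 R) (insert c0 C) A (bordered_inverse r0 c0 R C A N)"
  unfolding right_inverse_on_def
proof (intro ballI)
  fix r r' assume r: "r \<in> insert r0 R" and r': "r' \<in> insert r0 R"
  define a where "a = A r0 c0"
  define q where "q c = (\<Sum>r\<in>R. N c r * A r c0)" for c
  define s where "s = (\<Sum>c\<in>C. A r0 c * q c)"
  let ?S = "schur_complement r0 c0 A" and ?N = "bordered_inverse r0 c0 R C A N"
  have a: "a \<noteq> 0" using assms(5) by (simp add: a_def)
  have N_c0_r0: "?N c0 r0 = 1 / a + s / a\<^sup>2"
    by (simp add: bordered_inverse_def a_def s_def q_def)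
  have N_c0: "?N c0 r'' = - (\<Sum>c\<in>C. A r0 c * N c r'') / a" if "r'' \<noteq> r0" for r''
    using that by (simp add: bordered_inverse_def a_def)
  have N_C: "(\<Sum>c\<in>C. g c * ?N c r'') = (\<Sum>c\<in>C. g c * (if r'' = r0 then - q c / a else N c r''))"
    for g r''
    using assms(4) by (intro sum.cong) (auto simp: bordered_inverse_def q_def a_def)
  have split: "(\<Sum>c\<in>insert c0 C. A r c * ?N c r') = A r c0 * ?N c0 r' + (\<Sum>c\<in>C. A r c * ?N c r')"
    using assms(2,4) by simp
  have expand: "(\<Sum>c\<in>C. A r c * g c) = (\<Sum>c\<in>C. ?S r c * g c) + A r c0 / a * (\<Sum>c\<in>C. A r0 c * g c)"
    for g
    unfolding a_def by (rule sum_schur_complement)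
  have S_q: "(\<Sum>c\<in>C. ?S r c * q c) = A r c0" if "r \<in> R"
    unfolding q_def using right_inverse_on_mult[OF inv assms(1) that] .
  show "(\<Sum>c\<in>insert c0 C. A r c * ?N c r') = (if r = r' then 1 else 0)"
  proof (cases "r = r0"; cases "r' = r0")
    assume "r = r0" "r' = r0"
    then have "(\<Sum>c\<in>insert c0 C. A r c * ?N c r') = a * (1 / a + s / a\<^sup>2) - s / a"
      using split N_C[of "A r0"] by (simp add: N_c0_r0 a_def s_def sum_negf sum_divide_distrib)
    also have "\<dots> = 1"
      using a by (simp add: field_simps power2_eq_square)
    finally show ?thesis using \<open>r = r0\<close> \<open>r' = r0\<close> by simp
  next
    assume "r = r0" "r' \<noteq> r0"
    then show ?thesis
      using split N_C[of "A r0"] N_c0 a r' assms(3) by (simp add: a_def)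
  next
    assume "r \<noteq> r0" "r' = r0"
    then have "r \<in> R" using r by simp
    have "(\<Sum>c\<in>insert c0 C. A r c * ?N c r') = A r c0 * (1 / a + s / a\<^sup>2) - (A r c0 + A r c0 / a * s) / a"
      using split N_C[of "A r"] expand[of q] S_q[OF \<open>r \<in> R\<close>] \<open>r' = r0\<close>
      by (simp add: N_c0_r0 s_def sum_negf sum_divide_distrib[symmetric])
    also have "\<dots> = 0"
      using a by (simp add: field_simps power2_eq_square)
    finally show ?thesis using \<open>r \<noteq> r0\<close> \<open>r' = r0\<close> by simp
  next
    assume "r \<noteq> r0" "r' \<noteq> r0"
    then have "r \<in> R" "r' \<in> R" using r r' by simp_all
    then show ?thesis
      using split N_C[of "A r"] N_c0 expand[of "\<lambda>c. N c r'"] inv \<open>r' \<noteq> r0\<close> a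
      by (simp add: right_inverse_on_def)
  qed
qed

lemma bordered_inverse_transpose:
  fixes A :: "'r \<Rightarrow> 'c \<Rightarrow> 'a::field"
  shows "bordered_inverse c0 r0 C R (\<lambda>c r. A r c) (\<lambda>r c. N c r) = (\<lambda>r c. bordered_inverse r0 c0 R C A N c r)"
proof -
  have "(\<Sum>r'\<in>R. A r' c0 * (\<Sum>c'\<in>C. N c' r' * A r0 c')) = (\<Sum>c'\<in>C. A r0 c' * (\<Sum>r'\<in>R. N c' r' * A r' c0))"
    by (simp add: sum_distrib_left sum.swap[of _ R] ac_simps)
  then show ?thesis
    by (simp add: fun_eq_iff bordered_inverse_def ac_simps)
qed

lemma square_invertible_insert:
  assumes "r0 \<notin> R" "c0 \<notin> C" "A r0 c0 \<noteq> 0"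
    and "square_invertible R C (schur_complement r0 c0 A)"
  shows "square_invertible (insert r0 R) (insert c0 C) A"
proof -
  obtain N where fin: "finite R" "finite C" "card R = card C"
    and right: "right_inverse_on R C (schur_complement r0 c0 A) N"
    and left: "right_inverse_on C R N (schur_complement r0 c0 A)"
    using assms(4) unfolding square_invertible_iff_right_inverse_on by blast
  let ?N = "bordered_inverse r0 c0 R C A N"
  have "right_inverse_on (insert r0 R) (insert c0 C) A ?N"
    using right_inverse_on_insert[OF fin(1,2) assms(1-3) right] .
  moreover have "right_inverse_on (insert c0 C) (insert r0 R) ?N A"
  proof -
    \<comment> \<open>a left inverse is a right inverse of the transpose, whose Schur complement is transposed\<close>
    have schur: "schur_complement c0 r0 (\<lambda>c r. A r c) = (\<lambda>c r. schur_complement r0 c0 A r c)"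
      by (simp add: schur_complement_def fun_eq_iff field_simps)
    have left_transposed: "right_inverse_on C R (schur_complement c0 r0 (\<lambda>c r. A r c)) (\<lambda>r c. N c r)"
      unfolding schur by (subst right_inverse_on_transpose) (rule left)
    have "right_inverse_on (insert c0 C) (insert r0 R) (\<lambda>c r. A r c)
        (bordered_inverse c0 r0 C R (\<lambda>c r. A r c) (\<lambda>r c. N c r))"
      by (rule right_inverse_on_insert[OF fin(2,1) assms(2,1) _ left_transposed]) (rule assms(3))
    then show ?thesis
      by (subst (asm) bordered_inverse_transpose, subst (asm) right_inverse_on_transpose)
  qed
  ultimately show ?thesis
    using fin assms(1,2) unfolding square_invertible_iff_right_inverse_on by auto
qed

lemma full_column_rank_nonzero_in_column:
  assumes "full_column_rank R C A" "finite C" "c \<in> C"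
  obtains r where "r \<in> R" "A r c \<noteq> 0"
proof -
  have unit: "(\<Sum>c'\<in>C. A r c' * (if c' = c then 1 else 0)) = A r c" for r
    using assms(2,3) by (simp add: if_distrib[of "\<lambda>x. _ * x"] cong: if_cong)
  have "\<not> (\<forall>r\<in>R. A r c = 0)"
  proof
    assume "\<forall>r\<in>R. A r c = 0"
    then have "\<forall>c'\<in>C. (if c' = c then 1 else 0) = (0::complex)"
      using assms(1) unit unfolding full_column_rank_def
      by (elim allE[of _ "\<lambda>c'. if c' = c then 1 else 0"]) simp
    then show False
      using assms(3) by force
  qed
  then show ?thesis
    using that by blast
qed

lemma full_column_rank_schur_complement:
  assumes "full_column_rank R (insert c0 C) A" "finite C" "c0 \<notin> C" "r0 \<in> R" "A r0 c0 \<noteq> 0"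
  shows "full_column_rank (R - {r0}) C (schur_complement r0 c0 A)"
  unfolding full_column_rank_def
proof (intro allI impI)
  fix v assume v: "\<forall>r\<in>R - {r0}. (\<Sum>c\<in>C. schur_complement r0 c0 A r c * v c) = 0"
  define w where "w = v(c0 := - (\<Sum>c\<in>C. A r0 c * v c) / A r0 c0)"
  have "(\<Sum>c\<in>C. A r c * w c) = (\<Sum>c\<in>C. A r c * v c)" for r
    using assms(3) by (intro sum.cong) (auto simp: w_def)
  then have Aw: "(\<Sum>c\<in>insert c0 C. A r c * w c) = A r c0 * w c0 + (\<Sum>c\<in>C. A r c * v c)" for r
    using assms(2,3) by simp
  have "(\<Sum>c\<in>insert c0 C. A r c * w c) = 0" if "r \<in> R" for r
  proof (cases "r = r0")
    case True
    then show ?thesis using Aw assms(5) by (simp add: w_def)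
  next
    case False
    then show ?thesis
      using Aw v that sum_schur_complement[of A r v C r0 c0] by (simp add: w_def)
  qed
  then have "\<forall>c\<in>insert c0 C. w c = 0"
    using assms(1) unfolding full_column_rank_def by blast
  then show "\<forall>c\<in>C. v c = 0"
    using assms(3) unfolding w_def by (metis fun_upd_other insert_iff)
qed

lemma full_column_rank_imp_square_invertible_rows:
  assumes "finite C" "full_column_rank R C A"
  shows "\<exists>R'\<subseteq>R. square_invertible R' C A"
  using assms
proof (induction C arbitrary: R A rule: finite_induct)
  case empty
  have "square_invertible {} {} A"
    by (simp add: square_invertible_def)
  then show ?case by blast
next
  case (insert c0 C)
  have "finite (insert c0 C)"
    using insert.hyps(1) by simp
  then obtain r0 where r0: "r0 \<in> R" "A r0 c0 \<noteq> 0"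
    using full_column_rank_nonzero_in_column[OF insert.prems] by blast
  obtain R0 where R0: "R0 \<subseteq> R - {r0}" "square_invertible R0 C (schur_complement r0 c0 A)"
    using insert.IH full_column_rank_schur_complement[OF insert.prems insert.hyps(1,2) r0] by blast
  then have "square_invertible (insert r0 R0) (insert c0 C) A"
    using square_invertible_insert[of r0 R0 c0 C A] insert.hyps(2) r0(2) by blast
  then show ?case
    using R0(1) r0(1) by blast
qed

lemma null_space_parametrized_by_columns:
  fixes A :: "'r \<Rightarrow> 'c \<Rightarrow> 'a::field"
  assumes "finite B" "B1 \<subseteq> B" and left_inv: "right_inverse_on (B - B1) R N A"
  obtains E where "\<And>b \<gamma>. \<forall>r\<in>R. (\<Sum>\<beta>\<in>B. A r \<beta> * b \<beta>) = 0 \<Longrightarrow> \<gamma> \<in> B \<Longrightarrow>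
    b \<gamma> = (\<Sum>\<beta>\<in>B1. E \<gamma> \<beta> * b \<beta>)"
proof
  fix b \<gamma> assume null: "\<forall>r\<in>R. (\<Sum>\<beta>\<in>B. A r \<beta> * b \<beta>) = 0" and "\<gamma> \<in> B"
  let ?E = "\<lambda>\<gamma> \<beta>. if \<gamma> \<in> B1 then (if \<beta> = \<gamma> then 1 else 0) else - (\<Sum>r\<in>R. N \<gamma> r * A r \<beta>)"
  have fin: "finite B1" "finite (B - B1)"
    using assms(1,2) finite_subset by auto
  show "b \<gamma> = (\<Sum>\<beta>\<in>B1. ?E \<gamma> \<beta> * b \<beta>)"
  proof (cases "\<gamma> \<in> B1")
    case True
    then show ?thesis
      using fin by (simp add: if_distrib[of "\<lambda>x. x * _"] cong: if_cong)
  next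
    case False
    have null_split: "(\<Sum>c\<in>B - B1. A r c * b c) = - (\<Sum>\<beta>\<in>B1. A r \<beta> * b \<beta>)" if "r \<in> R" for r
      using null that sum.subset_diff[OF assms(2,1), of "\<lambda>\<beta>. A r \<beta> * b \<beta>"]
      by (simp add: eq_neg_iff_add_eq_0)
    have "b \<gamma> = (\<Sum>c\<in>B - B1. (\<Sum>r\<in>R. N \<gamma> r * A r c) * b c)"
      using left_inv False \<open>\<gamma> \<in> B\<close> fin(2)
      by (simp add: right_inverse_on_def if_distrib[of "\<lambda>x. x * _"] cong: if_cong)
    also have "\<dots> = (\<Sum>r\<in>R. N \<gamma> r * (\<Sum>c\<in>B - B1. A r c * b c))"
      by (simp add: sum_distrib_left sum_distrib_right sum.swap[of _ "B - B1"] mult.assoc)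
    also have "\<dots> = (\<Sum>r\<in>R. N \<gamma> r * - (\<Sum>\<beta>\<in>B1. A r \<beta> * b \<beta>))"
      using null_split by simp
    also have "\<dots> = (\<Sum>\<beta>\<in>B1. ?E \<gamma> \<beta> * b \<beta>)"
      using False by (simp add: sum_distrib_left sum_distrib_right sum.swap[of _ B1] mult.assoc sum_negf)
    finally show ?thesis .
  qed
qed

lemma Cmat_upper_row: "r \<in> upper_rows n f m k B \<Longrightarrow> Cmat f m k u0 r = Cmat f m k 0 r"
  by (auto simp: upper_rows_def Cmat_def fun_eq_iff)

lemma Cmat_lower_row:
  "Cmat f m k u0 (m + 1, t) \<beta> = (if \<beta> = t + var_x k then 1 else 0) - (if \<beta> = t then u0 else 0)"
  unfolding Cmat_def f_ext_def mono_poly_def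
  by (simp add: right_diff_distrib mult_single lookup_minus lookup_single when_def)

lemma Tset_last: "Tset n f m k B (Suc m) = {t \<in> B. t + var_x k \<in> B}"
  by (simp add: Tset_def)

lemma lower_rows_eq: "lower_rows n f m k B = (\<lambda>t. (m + 1, t)) ` Tset n f m k B (m + 1)"
  by (auto simp: lower_rows_def rows_def)

lemma card_lower_rows: "card (lower_rows n f m k B) = card (Tset n f m k B (m + 1))"
  unfolding lower_rows_eq by (rule card_image) (simp add: inj_on_def)

lemma lower_row_null_shift:
  assumes "finite B" "t \<in> Tset n f m k B (m + 1)"
    and "(\<Sum>\<beta>\<in>B. Cmat f m k u0 (m + 1, t) \<beta> * b \<beta>) = 0"
  shows "b (t + var_x k) = u0 * b t"
proof -
  have "(\<Sum>\<beta>\<in>B. Cmat f m k u0 (m + 1, t) \<beta> * b \<beta>)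
      = (\<Sum>\<beta>\<in>B. if \<beta> = t + var_x k then b \<beta> else 0) - (\<Sum>\<beta>\<in>B. if \<beta> = t then u0 * b \<beta> else 0)"
    unfolding Cmat_lower_row
    by (simp add: left_diff_distrib sum_subtractf if_distrib[of "\<lambda>x. x * _"] cong: if_cong)
  moreover have "t \<in> B" "t + var_x k \<in> B"
    using assms(2) by (simp_all add: Tset_last)
  ultimately show ?thesis
    using assms(1,3) by simp
qed

lemma resultant_row_selection:
  assumes "finite B" "B1 \<subseteq> B"
    and "card B1 = card (Tset n f m k B (m + 1))"
    and "full_column_rank (upper_rows n f m k B) (B - B1) (Cmat f m k 0)"
  obtains R' E where "R' \<subseteq> upper_rows n f m k B"
    and "card (R' \<union> lower_rows n f m k B) = card B"
    and "square_invertible R' (B - B1) (Cmat f m k 0)"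
    and "\<And>u0 b \<gamma>. \<forall>r\<in>R'. (\<Sum>\<beta>\<in>B. Cmat f m k u0 r \<beta> * b \<beta>) = 0 \<Longrightarrow> \<gamma> \<in> B \<Longrightarrow>
      b \<gamma> = (\<Sum>\<beta>\<in>B1. E \<gamma> \<beta> * b \<beta>)"
proof -
  let ?U = "upper_rows n f m k B" and ?L = "lower_rows n f m k B"
  have "finite (B - B1)"
    using assms(1) by simp
  then obtain R' where R': "R' \<subseteq> ?U" "square_invertible R' (B - B1) (Cmat f m k 0)"
    using full_column_rank_imp_square_invertible_rows[OF _ assms(4)] by blast
  then obtain N where fin: "finite R'" and card_R': "card R' = card (B - B1)"
    and left_inv: "right_inverse_on (B - B1) R' N (Cmat f m k 0)"
    unfolding square_invertible_iff_right_inverse_on by blast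
  obtain E where E: "\<And>b \<gamma>. \<forall>r\<in>R'. (\<Sum>\<beta>\<in>B. Cmat f m k 0 r \<beta> * b \<beta>) = 0 \<Longrightarrow> \<gamma> \<in> B \<Longrightarrow>
      b \<gamma> = (\<Sum>\<beta>\<in>B1. E \<gamma> \<beta> * b \<beta>)"
    using null_space_parametrized_by_columns[OF assms(1,2) left_inv] by blast
  have "R' \<inter> ?L = {}"
    using R'(1) by (auto simp: upper_rows_def lower_rows_def)
  moreover have "finite ?L"
    using assms(1) by (simp add: lower_rows_eq Tset_last)
  ultimately have "card (R' \<union> ?L) = card R' + card ?L"
    using fin by (simp add: card_Un_disjoint)
  also have "card ?L = card B1"
    using assms(3) by (simp add: card_lower_rows)
  also have "card R' = card B - card B1"
    using card_R' assms(1,2) by (simp add: card_Diff_subset finite_subset)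
  finally have card: "card (R' \<union> ?L) = card B"
    using card_mono[OF assms(1,2)] by simp
  show ?thesis
  proof (rule that[OF R'(1) card R'(2)])
    fix u0 b \<gamma> assume null: "\<forall>r\<in>R'. (\<Sum>\<beta>\<in>B. Cmat f m k u0 r \<beta> * b \<beta>) = 0" and "\<gamma> \<in> B"
    have "(\<Sum>\<beta>\<in>B. Cmat f m k 0 r \<beta> * b \<beta>) = 0" if "r \<in> R'" for r
    proof -
      have "Cmat f m k 0 r = Cmat f m k u0 r"
        using R'(1) that by (intro Cmat_upper_row[symmetric]) blast
      then show ?thesis
        using null that by simp
    qed
    then show "b \<gamma> = (\<Sum>\<beta>\<in>B1. E \<gamma> \<beta> * b \<beta>)"
      using E \<open>\<gamma> \<in> B\<close> by blast
  qed
qed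

lemma B1_a_eq: "B1_a n f m k B = Tset n f m k B (m + 1)"
  by (auto simp: B1_a_def Tset_last)

lemma B1_b_eq: "B1_b n f m k B = (\<lambda>t. t + var_x k) ` Tset n f m k B (m + 1)"
  by (auto simp: B1_b_def Tset_last)

lemma eigenproblem_B1_a:
  assumes "finite B"
    and "full_column_rank (upper_rows n f m k B) (B - B1_a n f m k B) (Cmat f m k 0)"
  shows "\<exists>R' \<subseteq> upper_rows n f m k B. card (R' \<union> lower_rows n f m k B) = card B \<and>
    square_invertible R' (B - B1_a n f m k B) (Cmat f m k 0) \<and>
    (\<exists>X. \<forall>u0 b. (\<forall>r\<in>R' \<union> lower_rows n f m k B. (\<Sum>\<beta>\<in>B. Cmat f m k u0 r \<beta> * b \<beta>) = 0) \<longrightarrow>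
       (\<forall>\<alpha>\<in>B1_a n f m k B. (\<Sum>\<beta>\<in>B1_a n f m k B. X \<alpha> \<beta> * b \<beta>) = u0 * b \<alpha>))"
proof -
  let ?T = "Tset n f m k B (m + 1)" and ?x = "var_x k"
  have sub: "?T \<subseteq> B"
    by (auto simp: Tset_last)
  obtain R' E where R': "R' \<subseteq> upper_rows n f m k B" "card (R' \<union> lower_rows n f m k B) = card B"
      "square_invertible R' (B - ?T) (Cmat f m k 0)"
    and E: "\<And>u0 b \<gamma>. \<forall>r\<in>R'. (\<Sum>\<beta>\<in>B. Cmat f m k u0 r \<beta> * b \<beta>) = 0 \<Longrightarrow> \<gamma> \<in> B \<Longrightarrow>
      b \<gamma> = (\<Sum>\<beta>\<in>?T. E \<gamma> \<beta> * b \<beta>)"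
    using resultant_row_selection[OF assms(1) sub refl] assms(2) unfolding B1_a_eq by blast
  have "(\<Sum>\<beta>\<in>?T. E (\<alpha> + ?x) \<beta> * b \<beta>) = u0 * b \<alpha>"
    if null: "\<forall>r\<in>R' \<union> lower_rows n f m k B. (\<Sum>\<beta>\<in>B. Cmat f m k u0 r \<beta> * b \<beta>) = 0"
      and "\<alpha> \<in> ?T" for u0 b \<alpha>
  proof -
    have "(m + 1, \<alpha>) \<in> lower_rows n f m k B"
      using \<open>\<alpha> \<in> ?T\<close> by (simp add: lower_rows_eq)
    then have "b (\<alpha> + ?x) = u0 * b \<alpha>"
      using lower_row_null_shift[OF assms(1) \<open>\<alpha> \<in> ?T\<close>] null by blast
    moreover have "\<alpha> + ?x \<in> B"
      using \<open>\<alpha> \<in> ?T\<close> by (simp add: Tset_last)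
    then have "b (\<alpha> + ?x) = (\<Sum>\<beta>\<in>?T. E (\<alpha> + ?x) \<beta> * b \<beta>)"
      using E null by blast
    ultimately show ?thesis
      by simp
  qed
  then show ?thesis
    unfolding B1_a_eq using R'
    by (intro exI[of _ R'] conjI exI[of _ "\<lambda>\<alpha> \<beta>. E (\<alpha> + ?x) \<beta>"] allI impI ballI) simp_all
qed

lemma eigenproblem_B1_b:
  assumes "finite B"
    and "full_column_rank (upper_rows n f m k B) (B - B1_b n f m k B) (Cmat f m k 0)"
  shows "\<exists>R' \<subseteq> upper_rows n f m k B. card (R' \<union> lower_rows n f m k B) = card B \<and>
    square_invertible R' (B - B1_b n f m k B) (Cmat f m k 0) \<and>
    (\<exists>X. \<forall>u0 b. u0 \<noteq> 0 \<longrightarrow>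
       (\<forall>r\<in>R' \<union> lower_rows n f m k B. (\<Sum>\<beta>\<in>B. Cmat f m k u0 r \<beta> * b \<beta>) = 0) \<longrightarrow>
       (\<forall>\<alpha>\<in>B1_b n f m k B. (\<Sum>\<beta>\<in>B1_b n f m k B. X \<alpha> \<beta> * b \<beta>) = - (1 / u0) * b \<alpha>))"
proof -
  let ?T = "Tset n f m k B (m + 1)" and ?x = "var_x k"
  let ?B1 = "(\<lambda>t. t + ?x) ` ?T"
  have sub: "?B1 \<subseteq> B"
    by (auto simp: Tset_last)
  have card: "card ?B1 = card ?T"
    by (rule card_image) (simp add: inj_on_def)
  obtain R' E where R': "R' \<subseteq> upper_rows n f m k B" "card (R' \<union> lower_rows n f m k B) = card B"
      "square_invertible R' (B - ?B1) (Cmat f m k 0)"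
    and E: "\<And>u0 b \<gamma>. \<forall>r\<in>R'. (\<Sum>\<beta>\<in>B. Cmat f m k u0 r \<beta> * b \<beta>) = 0 \<Longrightarrow> \<gamma> \<in> B \<Longrightarrow>
      b \<gamma> = (\<Sum>\<beta>\<in>?B1. E \<gamma> \<beta> * b \<beta>)"
    using resultant_row_selection[OF assms(1) sub card] assms(2) unfolding B1_b_eq by blast
  have "(\<Sum>\<beta>\<in>?B1. - E (\<alpha> - ?x) \<beta> * b \<beta>) = - (1 / u0) * b \<alpha>"
    if "u0 \<noteq> 0" and null: "\<forall>r\<in>R' \<union> lower_rows n f m k B. (\<Sum>\<beta>\<in>B. Cmat f m k u0 r \<beta> * b \<beta>) = 0"
      and "\<alpha> \<in> ?B1" for u0 b \<alpha>
  proof -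
    obtain t where t: "t \<in> ?T" "\<alpha> = t + ?x"
      using \<open>\<alpha> \<in> ?B1\<close> by blast
    have "(m + 1, t) \<in> lower_rows n f m k B"
      using t(1) by (simp add: lower_rows_eq)
    then have "b \<alpha> = u0 * b t"
      using lower_row_null_shift[OF assms(1) t(1)] null t(2) by blast
    moreover have "t \<in> B"
      using t(1) by (simp add: Tset_last)
    then have "b t = (\<Sum>\<beta>\<in>?B1. E t \<beta> * b \<beta>)"
      using E null by blast
    ultimately show ?thesis
      using t(2) \<open>u0 \<noteq> 0\<close> by (simp add: sum_negf)
  qed
  then show ?thesis
    unfolding B1_b_eq using R'
    by (intro exI[of _ R'] conjI exI[of _ "\<lambda>\<alpha> \<beta>. - E (\<alpha> - ?x) \<beta>"] allI impI ballI) simp_all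
qed

theorem proposition1:
  fixes n m k :: nat and f :: "nat \<Rightarrow> mpoly" and B :: "monom set"
  assumes "k \<in> {1..n}"
    and "\<forall>i\<in>{1..m}. \<forall>s\<in>Poly_Mapping.keys (f i). is_monom n s"
    and "finite B" and "\<forall>beta\<in>B. is_monom n beta"
    and "B_generated n f m k B"
    and "favourable n f m k B"
  shows
   "(let B1 = B1_a n f m k B; B2 = B - B1;
         U = upper_rows n f m k B; L = lower_rows n f m k B in
      full_column_rank U B2 (Cmat f m k 0) \<longrightarrow>
      (\<exists>R' \<subseteq> U. card (R' \<union> L) = card B \<and>
         square_invertible R' B2 (Cmat f m k 0) \<and>
         (\<exists>X :: monom \<Rightarrow> monom \<Rightarrow> complex. \<forall>u0 (b :: monom \<Rightarrow> complex).
            (\<forall>r\<in>R' \<union> L. (\<Sum>beta\<in>B. Cmat f m k u0 r beta * b beta) = 0) \<longrightarrow>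
            (\<forall>alpha\<in>B1. (\<Sum>beta\<in>B1. X alpha beta * b beta) = u0 * b alpha))))
    \<and>
    (let B1 = B1_b n f m k B; B2 = B - B1;
         U = upper_rows n f m k B; L = lower_rows n f m k B in
      full_column_rank U B2 (Cmat f m k 0) \<longrightarrow>
      (\<exists>R' \<subseteq> U. card (R' \<union> L) = card B \<and>
         square_invertible R' B2 (Cmat f m k 0) \<and>
         (\<exists>X :: monom \<Rightarrow> monom \<Rightarrow> complex. \<forall>u0 (b :: monom \<Rightarrow> complex).
            u0 \<noteq> 0 \<longrightarrow>
            (\<forall>r\<in>R' \<union> L. (\<Sum>beta\<in>B. Cmat f m k u0 r beta * b beta) = 0) \<longrightarrow>
            (\<forall>alpha\<in>B1. (\<Sum>beta\<in>B1. X alpha beta * b beta) = - (1 / u0) * b alpha))))"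
  unfolding Let_def
  using eigenproblem_B1_a[OF assms(3)] eigenproblem_B1_b[OF assms(3)] by (intro conjI impI)

end
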